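(* Let $G$ be a countable group, let $\mu$ be a non-degenerate probability measure on $G$, and let $\Omega$ be the set of all weights $\omega$ on $G$ such that $\mu$ has finite $\log\omega$-moment and $1/\omega\in\ell^1(G)$. Then the $\mu$-random walk has finite Avez entropy and \[ h(G,\mu)=\inf\{\mathrm{Ly}_\omega(G,\mu):\omega\in\Omega\}. \] Moreover, the infimum is attained at a weight $\bar\omega\in\Omega$ which also satisfies $\bar\omega^{-1}*\bar\omega^{-1}\le d\,\bar\omega^{-1}$ pointwise for some constant $d>0$; for this weight, $h(G,\mu)=\mathrm{Ly}_{\bar\omega}(G,\mu)$.
   Context: $\mu$ is non-degenerate if its support generates $G$ as a semigroup. A weight on $G$ is $\omega:G\to[a,\infty)$, $a>0$, with $\omega(st)\le C\omega(s)\omega(t)$ for some $C>0$ and all $s,t$. Finite $\log\omega$-moment: $\sum_s\mu(s)\log\omega(s)<\infty$. Convolution $f*g(s)=\sum_tf(t)g(t^{-1}s)$; $\mu^{*n}$ is the $n$-fold power. Shannon entropy $H(G,\mu)=-\sum_s\mu(s)\log\mu(s)$; Avez entropy $h(G,\mu)=\lim_n\frac1nH(G,\mu^{*n})$. Lyapunov exponent $\mathrm{Ly}_\omega(G,\mu)=\lim_n\frac1n\sum_s\mu^{*n}(s)\log\omega(s)$.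
   Formalization: The measure $\mu$ is also assumed to have finite Shannon entropy $H(G,\mu)=-\sum_s\mu(s)\log\mu(s)$. The statement above fails without it. *)

theory Defs
  imports "HOL-Analysis.Analysis"
begin

text \<open>The group G is a type of class group_add (the group operation is written +,
  it is NOT assumed commutative; inverse is unary minus, identity 0) and countable.\<close>

definition prob_fun :: "('a \<Rightarrow> real) \<Rightarrow> bool" where
  "prob_fun \<mu> \<longleftrightarrow> (\<forall>s. 0 \<le> \<mu> s) \<and> (\<mu> has_sum 1) UNIV"

definition supp :: "('a \<Rightarrow> real) \<Rightarrow> 'a set" where
  "supp f = {s. f s \<noteq> 0}"

inductive_set sgen :: "'a::group_add set \<Rightarrow> 'a set" for S :: "'a set" where
  base: "s \<in> S \<Longrightarrow> s \<in> sgen S"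
| step: "a \<in> sgen S \<Longrightarrow> b \<in> sgen S \<Longrightarrow> a + b \<in> sgen S"

definition nondegenerate :: "('a::group_add \<Rightarrow> real) \<Rightarrow> bool" where
  "nondegenerate \<mu> \<longleftrightarrow> sgen (supp \<mu>) = UNIV"

definition is_weight :: "('a::group_add \<Rightarrow> real) \<Rightarrow> bool" where
  "is_weight \<omega> \<longleftrightarrow> (\<exists>a>0. \<forall>s. a \<le> \<omega> s) \<and>
     (\<exists>C>0. \<forall>s t. \<omega> (s + t) \<le> C * \<omega> s * \<omega> t)"

definition conv :: "('a::group_add \<Rightarrow> real) \<Rightarrow> ('a \<Rightarrow> real) \<Rightarrow> 'a \<Rightarrow> real" where
  "conv f g s = (\<Sum>\<^sub>\<infinity>t. f t * g (- t + s))"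

fun conv_pow :: "('a::group_add \<Rightarrow> real) \<Rightarrow> nat \<Rightarrow> 'a \<Rightarrow> real" where
  "conv_pow \<mu> 0 = (\<lambda>s. if s = 0 then 1 else 0)"
| "conv_pow \<mu> (Suc n) = conv (conv_pow \<mu> n) \<mu>"

definition shannon_entropy :: "('a \<Rightarrow> real) \<Rightarrow> real" where
  "shannon_entropy p = - (\<Sum>\<^sub>\<infinity>s. p s * ln (p s))"

definition finite_entropy :: "('a \<Rightarrow> real) \<Rightarrow> bool" where
  "finite_entropy p \<longleftrightarrow> (\<lambda>s. p s * ln (p s)) summable_on UNIV"

definition log_moment_finite :: "('a \<Rightarrow> real) \<Rightarrow> ('a \<Rightarrow> real) \<Rightarrow> bool" where
  "log_moment_finite \<mu> \<omega> \<longleftrightarrow> (\<lambda>s. \<mu> s * ln (\<omega> s)) summable_on UNIV"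

definition inv_l1 :: "('a \<Rightarrow> real) \<Rightarrow> bool" where
  "inv_l1 \<omega> \<longleftrightarrow> (\<lambda>s. 1 / \<omega> s) summable_on UNIV"

definition lyap_seq :: "('a::group_add \<Rightarrow> real) \<Rightarrow> ('a \<Rightarrow> real) \<Rightarrow> nat \<Rightarrow> real" where
  "lyap_seq \<omega> \<mu> n = (\<Sum>\<^sub>\<infinity>s. conv_pow \<mu> n s * ln (\<omega> s)) / real n"

definition lyapunov :: "('a::group_add \<Rightarrow> real) \<Rightarrow> ('a \<Rightarrow> real) \<Rightarrow> real" where
  "lyapunov \<omega> \<mu> = lim (lyap_seq \<omega> \<mu>)"

definition avez_seq :: "('a::group_add \<Rightarrow> real) \<Rightarrow> nat \<Rightarrow> real" where
  "avez_seq \<mu> n = shannon_entropy (conv_pow \<mu> n) / real n"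

definition Omega :: "('a::group_add \<Rightarrow> real) \<Rightarrow> ('a \<Rightarrow> real) set" where
  "Omega \<mu> = {\<omega>. is_weight \<omega> \<and> log_moment_finite \<mu> \<omega> \<and> inv_l1 \<omega>}"

end

theory Submission
  imports Defs
begin

text \<open>
  For every \<open>\<omega> \<in> \<Omega>\<close>, Gibbs' inequality bounds the entropy of \<open>\<mu>\<^sup>*\<^sup>n\<close> by its
  \<open>ln \<omega>\<close>-moment plus \<open>\<parallel>1/\<omega>\<parallel>\<^sub>1 - 1\<close>; the moments are subadditive up to a constant,
  so by Fekete's lemma they grow linearly, and every limit of \<open>H(\<mu>\<^sup>*\<^sup>n)/n\<close> is at
  most \<open>Ly\<^sub>\<omega>\<close>. Conversely, let \<open>F = \<Sum>\<^sub>k (k+1)\<^sup>-\<^sup>2 \<mu>\<^sup>*\<^sup>k\<close> and \<open>\<omega>\<^sub>0 = 1/F\<close>.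
  Nondegeneracy makes \<open>F\<close> positive, and since the convolution square of the coefficient
  sequence is at most 8 times the sequence itself, \<open>F(s) F(t) \<le> 8 F(s+t)\<close> and
  \<open>F * F \<le> 8 F\<close>; so \<open>\<omega>\<^sub>0 \<in> \<Omega>\<close> has the extra property. As \<open>F \<ge> (n+1)\<^sup>-\<^sup>2 \<mu>\<^sup>*\<^sup>n\<close>,
  the \<open>ln \<omega>\<^sub>0\<close>-moment of \<open>\<mu>\<^sup>*\<^sup>n\<close> exceeds \<open>H(\<mu>\<^sup>*\<^sup>n)\<close> by at most \<open>2 ln(n+1)\<close>,
  which squeezes \<open>H(\<mu>\<^sup>*\<^sup>n)/n\<close> onto \<open>Ly\<^sub>\<omega>\<^sub>0\<close>.
\<close>

lemma has_sum_point_mass: "((\<lambda>x. if x = a then c else 0) has_sum c) UNIV"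
  by (rule has_sum_finite_neutralI[of "{a}"]) auto

lemma infsum_ge_term:
  fixes f :: "'a \<Rightarrow> real"
  assumes "f summable_on A" "\<And>x. x \<in> A \<Longrightarrow> 0 \<le> f x" "a \<in> A"
  shows "f a \<le> infsum f A"
proof -
  have "infsum f {a} \<le> infsum f A"
    by (rule infsum_mono_neutral) (use assms in auto)
  then show ?thesis by simp
qed

lemma has_sum_diff:
  fixes f g :: "'a \<Rightarrow> 'b::topological_ab_group_add"
  assumes "(f has_sum a) A" "(g has_sum b) A"
  shows "((\<lambda>x. f x - g x) has_sum (a - b)) A"
proof -
  have "((\<lambda>x. - g x) has_sum - b) A"
    using assms(2) by (simp add: has_sum_uminus)
  from has_sum_add[OF assms(1) this] show ?thesis by simp
qed

lemma has_sum_product: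
  fixes f :: "'a \<Rightarrow> real" and g :: "'b \<Rightarrow> real"
  assumes f: "f summable_on UNIV" and g: "g summable_on UNIV"
  shows "((\<lambda>(x, y). f x * g y) has_sum (infsum f UNIV * infsum g UNIV)) UNIV"
proof -
  have abs_g: "(\<lambda>y. norm (g y)) summable_on UNIV"
    using g summable_on_iff_abs_summable_on_real by blast
  have rows: "((\<lambda>y. norm (f x * g y)) has_sum norm (f x) * infsum (\<lambda>y. norm (g y)) UNIV) UNIV" for x
    using has_sum_cmult_right[OF has_sum_infsum[OF abs_g], of "norm (f x)"] by (simp add: abs_mult)
  have "(\<lambda>x. norm (f x) * infsum (\<lambda>y. norm (g y)) UNIV) summable_on UNIV"
    using f summable_on_iff_abs_summable_on_real summable_on_cmult_left by blast
  then have "(\<lambda>(x, y). norm (f x * g y)) summable_on UNIV \<times> UNIV"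
    by (rule summable_on_SigmaI[rotated]) (use rows in auto)
  then have "(\<lambda>p. norm ((\<lambda>(x, y). f x * g y) p)) summable_on UNIV"
    by (simp add: case_prod_unfold)
  then have summable: "(\<lambda>(x, y). f x * g y) summable_on UNIV"
    by (rule abs_summable_summable)
  have "infsum (\<lambda>(x, y). f x * g y) UNIV = infsum (\<lambda>x. infsum (\<lambda>y. f x * g y) UNIV) UNIV"
    using infsum_Sigma_banach[of "\<lambda>(x, y). f x * g y" UNIV "\<lambda>_. UNIV"] summable by simp
  also have "\<dots> = infsum f UNIV * infsum g UNIV"
    by (simp add: infsum_cmult_right' infsum_cmult_left')
  finally show ?thesis using has_sum_infsum[OF summable] by simp
qed

section \<open>Convolution of probability functions\<close>

lemma prob_funD:
  assumes "prob_fun f"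
  shows "0 \<le> f s" "(f has_sum 1) UNIV" "f summable_on UNIV" "infsum f UNIV = 1" "f s \<le> 1"
proof -
  show "0 \<le> f s" "(f has_sum 1) UNIV" using assms by (auto simp: prob_fun_def)
  then show "f summable_on UNIV" "infsum f UNIV = 1"
    using assms by (auto simp: prob_fun_def summable_on_def infsumI)
  then show "f s \<le> 1" using infsum_ge_term[of f UNIV s] assms by (auto simp: prob_fun_def)
qed

definition expect :: "('a \<Rightarrow> real) \<Rightarrow> ('a \<Rightarrow> real) \<Rightarrow> real" where
  "expect p L = (\<Sum>\<^sub>\<infinity>s. p s * L s)"

lemma expect_const: "prob_fun p \<Longrightarrow> expect p (\<lambda>_. c) = c"
  by (simp add: expect_def infsum_cmult_left' prob_funD(4))

lemma has_sum_conv: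
  fixes f g :: "'a::group_add \<Rightarrow> real"
  assumes "prob_fun f" "prob_fun g"
  shows "((\<lambda>t. f t * g (- t + s)) has_sum conv f g s) UNIV"
proof -
  have "(\<lambda>t. f t * g (- t + s)) summable_on UNIV"
    by (rule summable_on_comparison_test[OF prob_funD(3)[OF assms(1)]])
       (use prob_funD[OF assms(1)] prob_funD[OF assms(2)] in \<open>auto intro: mult_left_le\<close>)
  then show ?thesis by (simp add: conv_def)
qed

lemma conv_nonneg: "prob_fun f \<Longrightarrow> prob_fun g \<Longrightarrow> 0 \<le> conv f g s"
  unfolding conv_def by (rule infsum_nonneg) (simp add: prob_funD(1))

lemma has_sum_conv_times:
  fixes f g h :: "'a::group_add \<Rightarrow> real"
  assumes pf: "prob_fun f" and pg: "prob_fun g"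
    and pairs: "((\<lambda>(x, y). f x * g y * h (x + y)) has_sum T) UNIV"
  shows "((\<lambda>s. conv f g s * h s) has_sum T) UNIV"
proof -
  have "((\<lambda>(x, s). f x * g (- x + s) * h s) has_sum T) UNIV"
    using pairs
    by (subst has_sum_reindex_bij_witness[where j="\<lambda>(x, s). (x, - x + s)" and i="\<lambda>(x, y). (x, x + y)"
          and T=UNIV and h="\<lambda>(x, y). f x * g y * h (x + y)" and s'=T])
       (auto simp: add.assoc)
  then have swapped: "((\<lambda>(s, x). f x * g (- x + s) * h s) has_sum T) (UNIV \<times> UNIV)"
    by (subst has_sum_swap) (simp add: case_prod_unfold)
  have rows: "((\<lambda>x. f x * g (- x + s) * h s) has_sum conv f g s * h s) UNIV" for s
    using has_sum_cmult_left[OF has_sum_conv[OF pf pg]] by simp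
  show ?thesis
    by (rule has_sum_SigmaD[OF swapped]) (simp add: rows)
qed

lemma prob_fun_conv:
  assumes pf: "prob_fun f" and pg: "prob_fun g"
  shows "prob_fun (conv f g)"
proof -
  have "((\<lambda>(x, y). f x * g y * 1) has_sum 1) UNIV"
    using has_sum_product[OF prob_funD(3)[OF pf] prob_funD(3)[OF pg]] by (simp add: prob_funD(4) pf pg)
  from has_sum_conv_times[OF pf pg this] show ?thesis
    using conv_nonneg[OF pf pg] by (simp add: prob_fun_def)
qed

lemma conv_expect_le:
  fixes f g L L1 L2 :: "'a::group_add \<Rightarrow> real"
  assumes pf: "prob_fun f" and pg: "prob_fun g"
    and lower: "\<And>s. B \<le> L s"
    and L1: "(\<lambda>x. f x * L1 x) summable_on UNIV" and L2: "(\<lambda>y. g y * L2 y) summable_on UNIV"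
    and split: "\<And>x y. L (x + y) \<le> L1 x + L2 y"
  shows "(\<lambda>s. conv f g s * L s) summable_on UNIV"
    and "expect (conv f g) L \<le> expect f L1 + expect g L2"
proof -
  note F = prob_funD[OF pf] and G = prob_funD[OF pg]
  define \<Psi> where "\<Psi> = (\<lambda>(x, y). f x * L1 x * g y + f x * (g y * L2 y) - B * (f x * g y))"
  have \<Psi>_sum: "(\<Psi> has_sum expect f L1 + expect g L2 - B) UNIV"
    using has_sum_diff[OF has_sum_add[OF has_sum_product[OF L1 G(3)] has_sum_product[OF F(3) L2]]
        has_sum_cmult_right[OF has_sum_product[OF F(3) G(3)], of B]]
    by (simp add: \<Psi>_def expect_def F(4) G(4) case_prod_unfold)
  define \<Phi> where "\<Phi> = (\<lambda>(x, y). f x * g y * (L (x + y) - B))"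
  have \<Phi>_le: "\<Phi> p \<le> \<Psi> p" and \<Phi>_nonneg: "0 \<le> \<Phi> p" for p
  proof -
    obtain x y where p: "p = (x, y)" by (cases p)
    have "f x * g y * (L (x + y) - B) \<le> f x * g y * (L1 x + L2 y - B)"
      using split[of x y] F(1) G(1) by (intro mult_left_mono) auto
    then show "\<Phi> p \<le> \<Psi> p" by (simp add: p \<Phi>_def \<Psi>_def algebra_simps)
    show "0 \<le> \<Phi> p" using lower[of "x + y"] F(1) G(1) by (simp add: p \<Phi>_def)
  qed
  have "\<Phi> summable_on UNIV"
    by (rule summable_on_comparison_test[OF has_sum_imp_summable[OF \<Psi>_sum] \<Phi>_le \<Phi>_nonneg])
  then have \<Phi>_sum: "(\<Phi> has_sum infsum \<Phi> UNIV) UNIV" by (rule has_sum_infsum)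
  have "((\<lambda>s. conv f g s * (L s - B) + B * conv f g s) has_sum infsum \<Phi> UNIV + B * 1) UNIV"
    using has_sum_conv_times[OF pf pg] \<Phi>_sum prob_funD(2)[OF prob_fun_conv[OF pf pg]]
    by (intro has_sum_add has_sum_cmult_right) (simp_all add: \<Phi>_def case_prod_unfold)
  then have sum: "((\<lambda>s. conv f g s * L s) has_sum infsum \<Phi> UNIV + B) UNIV"
    by (simp add: algebra_simps)
  then show "(\<lambda>s. conv f g s * L s) summable_on UNIV" by (rule has_sum_imp_summable)
  have "infsum \<Phi> UNIV \<le> expect f L1 + expect g L2 - B"
    by (rule has_sum_mono[OF \<Phi>_sum \<Psi>_sum \<Phi>_le])
  then show "expect (conv f g) L \<le> expect f L1 + expect g L2"
    using infsumI[OF sum] by (simp add: expect_def)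
qed

definition dirac :: "'a::zero \<Rightarrow> real" where
  "dirac = (\<lambda>s. if s = 0 then 1 else 0)"

lemma prob_fun_dirac: "prob_fun dirac"
  unfolding prob_fun_def dirac_def using has_sum_point_mass[of 0 1] by auto

lemma summable_dirac_times: "(\<lambda>s. dirac s * c s) summable_on UNIV"
proof -
  have "(\<lambda>s. dirac s * c s) = (\<lambda>s. if s = 0 then c 0 else 0)"
    by (auto simp: dirac_def)
  then show ?thesis using has_sum_point_mass[of 0 "c 0"] by (auto simp: summable_on_def)
qed

lemma conv_dirac_right: "conv f dirac = f"
proof
  fix s
  have "conv f dirac s = infsum (\<lambda>t. if t = s then f s else 0) UNIV"
  proof -
    have "- t + s = 0 \<longleftrightarrow> t = s" for t
      by (metis add_minus_cancel add.right_neutral left_minus)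
    then show ?thesis unfolding conv_def dirac_def by (intro infsum_cong) auto
  qed
  then show "conv f dirac s = f s"
    using infsumI[OF has_sum_point_mass] by simp
qed

lemma conv_dirac_left:
  fixes f :: "'a::group_add \<Rightarrow> real"
  shows "conv dirac f = f"
proof
  fix s
  have "conv dirac f s = infsum (\<lambda>t::'a. if t = 0 then f s else 0) UNIV"
    unfolding conv_def dirac_def by (intro infsum_cong) auto
  then show "conv dirac f s = f s"
    using infsumI[OF has_sum_point_mass] by simp
qed

lemma conv_assoc:
  fixes f g k :: "'a::group_add \<Rightarrow> real"
  assumes pf: "prob_fun f" and pg: "prob_fun g" and pk: "prob_fun k"
  shows "conv (conv f g) k = conv f (conv g k)"
proof
  fix s
  note F = prob_funD[OF pf] and G = prob_funD[OF pg] and K = prob_funD[OF pk]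
  have "(\<lambda>(t, u). f u * g (- u + t)) summable_on UNIV"
    using has_sum_imp_summable[OF has_sum_product[OF F(3) G(3)]]
    by (subst summable_on_reindex_bij_witness[where j="\<lambda>(t, u). (u, - u + t)"
          and i="\<lambda>(x, y). (x + y, x)" and T=UNIV and h="\<lambda>(x, y). f x * g y"])
       (auto simp: add.assoc)
  then have summable: "(\<lambda>(t, u). f u * g (- u + t) * k (- t + s)) summable_on UNIV"
    by (rule summable_on_comparison_test) (use F G K in \<open>auto intro!: mult_left_le\<close>)
  have "conv (conv f g) k s = (\<Sum>\<^sub>\<infinity>t. \<Sum>\<^sub>\<infinity>u. f u * g (- u + t) * k (- t + s))"
    unfolding conv_def by (simp add: infsum_cmult_left')
  also have "\<dots> = (\<Sum>\<^sub>\<infinity>u. \<Sum>\<^sub>\<infinity>t. f u * g (- u + t) * k (- t + s))"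
    by (rule infsum_swap_banach) (use summable in simp)
  also have "\<dots> = (\<Sum>\<^sub>\<infinity>u. f u * (\<Sum>\<^sub>\<infinity>v. g v * k (- v + (- u + s))))"
  proof -
    have "(\<Sum>\<^sub>\<infinity>t. g (- u + t) * k (- t + s)) = (\<Sum>\<^sub>\<infinity>v. g v * k (- v + (- u + s)))" for u
      by (rule infsum_reindex_bij_witness[where j="\<lambda>t. - u + t" and i="\<lambda>v. u + v"])
         (auto simp: add.assoc minus_add)
    then show ?thesis by (simp add: infsum_cmult_right' mult.assoc)
  qed
  also have "\<dots> = conv f (conv g k) s" unfolding conv_def ..
  finally show "conv (conv f g) k s = conv f (conv g k) s" .
qed

lemma prob_fun_conv_pow: "prob_fun \<mu> \<Longrightarrow> prob_fun (conv_pow \<mu> n)"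
  by (induction n) (auto simp: prob_fun_dirac prob_fun_conv simp flip: dirac_def)

lemma conv_pow_1: "conv_pow \<mu> 1 = \<mu>"
  by (simp add: conv_dirac_left flip: dirac_def)

lemma conv_pow_add:
  assumes "prob_fun \<mu>"
  shows "conv_pow \<mu> (n + m) = conv (conv_pow \<mu> n) (conv_pow \<mu> m)"
proof (induction m)
  case 0
  then show ?case by (simp add: conv_dirac_right flip: dirac_def)
next
  case (Suc m)
  then show ?case using conv_assoc[OF prob_fun_conv_pow[OF assms] prob_fun_conv_pow[OF assms] assms] by simp
qed

lemma conv_pow_mult_le:
  assumes "prob_fun \<mu>"
  shows "conv_pow \<mu> n a * conv_pow \<mu> m b \<le> conv_pow \<mu> (n + m) (a + b)"
proof -
  note Pn = prob_fun_conv_pow[OF assms, of n] and Pm = prob_fun_conv_pow[OF assms, of m]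
  have "conv_pow \<mu> n a * conv_pow \<mu> m (- a + (a + b)) \<le> conv (conv_pow \<mu> n) (conv_pow \<mu> m) (a + b)"
    unfolding conv_def
    by (rule infsum_ge_term[OF has_sum_imp_summable[OF has_sum_conv[OF Pn Pm]]])
       (simp_all add: prob_funD(1)[OF Pn] prob_funD(1)[OF Pm])
  then show ?thesis by (simp add: conv_pow_add[OF assms] add.assoc[symmetric])
qed

lemma conv_pow_pos:
  assumes "prob_fun \<mu>" and "nondegenerate \<mu>"
  obtains n where "0 < conv_pow \<mu> n s"
proof -
  have "s \<in> sgen (supp \<mu>)" using assms(2) by (simp add: nondegenerate_def)
  then have "\<exists>n. 0 < conv_pow \<mu> n s"
  proof (induction s rule: sgen.induct)
    case (base s)
    then have "0 < \<mu> s"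
      using prob_funD(1)[OF assms(1), of s] by (auto simp: supp_def)
    then show ?case using conv_pow_1 by metis
  next
    case (step a b)
    then obtain n m where "0 < conv_pow \<mu> n a" "0 < conv_pow \<mu> m b" by blast
    then have "0 < conv_pow \<mu> n a * conv_pow \<mu> m b" by simp
    also have "\<dots> \<le> conv_pow \<mu> (n + m) (a + b)" by (rule conv_pow_mult_le[OF assms(1)])
    finally show ?case by blast
  qed
  then show ?thesis using that by blast
qed

section \<open>Subadditive sequences\<close>

lemma subadditive_le_multiple:
  fixes b :: "nat \<Rightarrow> real"
  assumes sub: "\<And>n m. b (n + m) \<le> b n + b m"
  shows "b (q * k + r) \<le> real q * b k + b r"
proof (induction q)
  case 0
  then show ?case by simp
next
  case (Suc q)
  have "b (Suc q * k + r) \<le> b k + b (q * k + r)"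
    using sub[of k "q * k + r"] by (simp add: add.assoc)
  with Suc show ?case by (simp add: algebra_simps)
qed

lemma subadditive_quotient_le:
  fixes b :: "nat \<Rightarrow> real"
  assumes sub: "\<And>n m. b (n + m) \<le> b n + b m" and k: "0 < k" and n: "0 < n"
  shows "b n / real n \<le> b k / real k + (\<bar>b k\<bar> + (\<Sum>r<k. \<bar>b r\<bar>)) / real n"
proof -
  define q where "q = n div k"
  define r where "r = n mod k"
  have n_eq: "n = q * k + r" and "r < k" using k by (simp_all add: q_def r_def)
  then have "\<bar>real q - real n / real k\<bar> \<le> 1"
    using k by (simp add: field_simps)
  then have "(real q - real n / real k) * b k \<le> \<bar>b k\<bar>"
    by (metis abs_ge_self abs_ge_zero abs_mult dual_order.trans mult_left_le_one_le)
  moreover have "\<bar>b r\<bar> \<le> (\<Sum>r<k. \<bar>b r\<bar>)"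
    using \<open>r < k\<close> by (intro member_le_sum) auto
  moreover have "b n \<le> real q * b k + b r"
    using subadditive_le_multiple[of b, OF sub, of q k r] n_eq by simp
  ultimately have "b n \<le> real n * (b k / real k) + (\<bar>b k\<bar> + (\<Sum>r<k. \<bar>b r\<bar>))"
    by (simp add: algebra_simps)
  then show ?thesis
    using n by (simp add: field_simps)
qed

lemma fekete:
  fixes b :: "nat \<Rightarrow> real"
  assumes sub: "\<And>n m. b (n + m) \<le> b n + b m" and lower: "\<And>n. K \<le> b n"
  shows "(\<lambda>n. b n / real n) \<longlonglongrightarrow> (INF n\<in>{1..}. b n / real n)"
proof -
  define L where "L = (INF n\<in>{1..}. b n / real n)"
  have "min K 0 \<le> b n / real n" if "1 \<le> n" for n
  proof -
    have "min K 0 * real n \<le> min K 0 * 1"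
      using that by (intro mult_left_mono_neg) auto
    also have "\<dots> \<le> b n" using lower[of n] by simp
    finally show ?thesis using that by (simp add: pos_le_divide_eq)
  qed
  then have bdd: "bdd_below ((\<lambda>n. b n / real n) ` {1..})"
    by (intro bdd_belowI[of _ "min K 0"]) auto
  have L_le: "L \<le> b n / real n" if "1 \<le> n" for n
    unfolding L_def using that bdd by (intro cINF_lower) auto
  show ?thesis
    unfolding L_def[symmetric]
  proof (rule LIMSEQ_I)
    fix e :: real
    assume e: "0 < e"
    then have "L < L + e / 2" by simp
    then have "\<exists>k\<in>{1..}. b k / real k < L + e / 2"
      unfolding L_def using cINF_less_iff[OF _ bdd] by blast
    then obtain k where k: "1 \<le> k" "b k / real k < L + e / 2" by auto
    define D where "D = \<bar>b k\<bar> + (\<Sum>r<k. \<bar>b r\<bar>)"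
    have "norm (b n / real n - L) < e" if "nat \<lceil>2 * D / e\<rceil> + 1 \<le> n" for n
    proof -
      have n: "0 < n" "2 * D / e < real n" using that by linarith+
      then have "D / real n < e / 2"
        using e by (simp add: field_simps)
      then have "b n / real n < L + e"
        using subadditive_quotient_le[of b, OF sub, of k n] k n unfolding D_def by linarith
      then show ?thesis using L_le[of n] n e by simp
    qed
    then show "\<exists>N. \<forall>n\<ge>N. norm (b n / real n - L) < e" by blast
  qed
qed

section \<open>Lyapunov exponents\<close>

lemma is_weight_pos: "is_weight \<omega> \<Longrightarrow> 0 < \<omega> s"
  unfolding is_weight_def by (meson less_le_trans)

lemma ln_weight_bounds:
  assumes "is_weight \<omega>"
  obtains A B where "\<And>s. A \<le> ln (\<omega> s)" "\<And>s t. ln (\<omega> (s + t)) \<le> B + ln (\<omega> s) + ln (\<omega> t)"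
proof -
  from assms obtain a C where a: "0 < a" "\<And>s. a \<le> \<omega> s"
    and C: "0 < C" "\<And>s t. \<omega> (s + t) \<le> C * \<omega> s * \<omega> t"
    unfolding is_weight_def by blast
  note pos = is_weight_pos[OF assms]
  have "ln (\<omega> (s + t)) \<le> ln C + ln (\<omega> s) + ln (\<omega> t)" for s t
  proof -
    have "ln (\<omega> (s + t)) \<le> ln (C * \<omega> s * \<omega> t)" using C pos by simp
    also have "\<dots> = ln C + ln (\<omega> s) + ln (\<omega> t)" using C pos[of s] pos[of t] by (simp add: ln_mult)
    finally show ?thesis .
  qed
  moreover have "ln a \<le> ln (\<omega> s)" for s using a(1) a(2)[of s] by simp
  ultimately show ?thesis using that by blast
qed

lemma has_sum_expect_add_const:
  assumes "prob_fun p" and "(\<lambda>s. p s * L s) summable_on UNIV"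
  shows "((\<lambda>s. p s * (c + L s)) has_sum c + expect p L) UNIV"
  using has_sum_add[OF has_sum_cmult_left[OF prob_funD(2)[OF assms(1)], of c]
      has_sum_infsum[OF assms(2)]]
  by (simp add: expect_def algebra_simps)

lemma expect_ge:
  assumes "prob_fun p" and "(\<lambda>s. p s * L s) summable_on UNIV" and "\<And>s. A \<le> L s"
  shows "A \<le> expect p L"
proof -
  have "expect p (\<lambda>_. A) \<le> expect p L"
    unfolding expect_def
    by (rule infsum_mono[OF summable_on_cmult_left[OF prob_funD(3)[OF assms(1)]] assms(2)])
       (simp add: assms(3) mult_left_mono prob_funD(1)[OF assms(1)])
  then show ?thesis by (simp add: expect_const assms(1))
qed

context
  fixes \<mu> \<omega> :: "'a::group_add \<Rightarrow> real"
  assumes pm: "prob_fun \<mu>" and w: "is_weight \<omega>" and lm: "log_moment_finite \<mu> \<omega>"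
begin

lemma summable_conv_pow_ln_weight: "(\<lambda>s. conv_pow \<mu> n s * ln (\<omega> s)) summable_on UNIV"
proof (induction n)
  case 0
  then show ?case using summable_dirac_times by (simp flip: dirac_def)
next
  case (Suc n)
  obtain A B where lower: "\<And>s. A \<le> ln (\<omega> s)"
    and sub: "\<And>s t. ln (\<omega> (s + t)) \<le> B + ln (\<omega> s) + ln (\<omega> t)"
    using ln_weight_bounds[OF w] by blast
  have "(\<lambda>s. conv_pow \<mu> n s * (B + ln (\<omega> s))) summable_on UNIV"
    using has_sum_expect_add_const[OF prob_fun_conv_pow[OF pm] Suc.IH, where c=B]
    by (rule has_sum_imp_summable)
  from conv_expect_le(1)[OF prob_fun_conv_pow[OF pm] pm lower this lm[unfolded log_moment_finite_def]]
  show ?case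
    using sub by simp
qed

lemma expect_conv_pow_ln_weight_subadditive:
  assumes sub: "\<And>s t. ln (\<omega> (s + t)) \<le> B + ln (\<omega> s) + ln (\<omega> t)"
  shows "expect (conv_pow \<mu> (n + m)) (\<lambda>s. ln (\<omega> s))
    \<le> B + expect (conv_pow \<mu> n) (\<lambda>s. ln (\<omega> s)) + expect (conv_pow \<mu> m) (\<lambda>s. ln (\<omega> s))"
proof -
  obtain A where lower: "\<And>s. A \<le> ln (\<omega> s)"
    using ln_weight_bounds[OF w] by metis
  have L1: "(\<lambda>s. conv_pow \<mu> n s * (B + ln (\<omega> s))) summable_on UNIV"
    and E1: "expect (conv_pow \<mu> n) (\<lambda>s. B + ln (\<omega> s)) = B + expect (conv_pow \<mu> n) (\<lambda>s. ln (\<omega> s))"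
    using has_sum_expect_add_const[OF prob_fun_conv_pow[OF pm] summable_conv_pow_ln_weight, where c=B]
    by (auto simp: has_sum_iff expect_def)
  have "expect (conv_pow \<mu> (n + m)) (\<lambda>s. ln (\<omega> s))
      \<le> expect (conv_pow \<mu> n) (\<lambda>s. B + ln (\<omega> s)) + expect (conv_pow \<mu> m) (\<lambda>s. ln (\<omega> s))"
    unfolding conv_pow_add[OF pm]
    by (rule conv_expect_le(2)[OF prob_fun_conv_pow[OF pm] prob_fun_conv_pow[OF pm] lower L1
          summable_conv_pow_ln_weight]) (use sub in \<open>simp add: add.assoc\<close>)
  with E1 show ?thesis by simp
qed

lemma lyap_seq_tendsto_lyapunov: "lyap_seq \<omega> \<mu> \<longlonglongrightarrow> lyapunov \<omega> \<mu>"
proof -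
  obtain A B where lower: "\<And>s. A \<le> ln (\<omega> s)"
    and sub: "\<And>s t. ln (\<omega> (s + t)) \<le> B + ln (\<omega> s) + ln (\<omega> t)"
    using ln_weight_bounds[OF w] by blast
  define b where "b n = expect (conv_pow \<mu> n) (\<lambda>s. ln (\<omega> s)) + B" for n
  have "(\<lambda>n. b n / real n) \<longlonglongrightarrow> (INF n\<in>{1..}. b n / real n)"
  proof (rule fekete)
    show "b (n + m) \<le> b n + b m" for n m
      using expect_conv_pow_ln_weight_subadditive[OF sub, of n m] by (simp add: b_def)
    show "A + B \<le> b n" for n
      using expect_ge[OF prob_fun_conv_pow[OF pm] summable_conv_pow_ln_weight lower] by (simp add: b_def)
  qed
  then have "(\<lambda>n. b n / real n - B / real n) \<longlonglongrightarrow> (INF n\<in>{1..}. b n / real n) - 0"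
    by (intro tendsto_diff lim_const_over_n)
  moreover have "(\<lambda>n. b n / real n - B / real n) = lyap_seq \<omega> \<mu>"
    by (auto simp: b_def lyap_seq_def expect_def diff_divide_distrib[symmetric])
  ultimately have "convergent (lyap_seq \<omega> \<mu>)"
    by (auto simp: convergent_def)
  then show ?thesis
    by (simp add: lyapunov_def convergent_LIMSEQ_iff)
qed

end

lemma entropy_le_cross_entropy:
  fixes p \<omega> :: "'a \<Rightarrow> real"
  assumes pp: "prob_fun p" and pos: "\<And>s. 0 < \<omega> s"
    and L: "(\<lambda>s. p s * ln (\<omega> s)) summable_on UNIV" and inv: "(\<lambda>s. 1 / \<omega> s) summable_on UNIV"
  shows "finite_entropy p"
    and "shannon_entropy p \<le> expect p (\<lambda>s. ln (\<omega> s)) + (\<Sum>\<^sub>\<infinity>s. 1 / \<omega> s) - 1"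
proof -
  note P = prob_funD[OF pp]
  have pointwise: "- (p s * ln (p s)) \<le> p s * ln (\<omega> s) + 1 / \<omega> s - p s" for s
  proof (cases "p s = 0")
    case True
    then show ?thesis using pos[of s] by simp
  next
    case False
    then have ps: "0 < p s" using P(1)[of s] by simp
    have "ln (1 / (p s * \<omega> s)) \<le> 1 / (p s * \<omega> s) - 1"
      using ps pos[of s] by (intro ln_le_minus_one) simp
    then have "- ln (p s) - ln (\<omega> s) \<le> 1 / (p s * \<omega> s) - 1"
      using ps pos[of s] by (simp add: ln_div ln_mult)
    then have "p s * (- ln (p s) - ln (\<omega> s)) \<le> p s * (1 / (p s * \<omega> s) - 1)"
      using ps by (intro mult_left_mono) auto
    then show ?thesis using ps by (simp add: algebra_simps)
  qed
  have nonneg: "0 \<le> - (p s * ln (p s))" for s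
    using P(1)[of s] P(5)[of s] by (cases "p s = 0") (auto intro: mult_nonneg_nonpos)
  have bound: "((\<lambda>s. p s * ln (\<omega> s) + 1 / \<omega> s - p s) has_sum
      expect p (\<lambda>s. ln (\<omega> s)) + (\<Sum>\<^sub>\<infinity>s. 1 / \<omega> s) - 1) UNIV"
    unfolding expect_def
    by (intro has_sum_diff has_sum_add has_sum_infsum L inv P(2))
  have "(\<lambda>s. - (p s * ln (p s))) summable_on UNIV"
    by (rule summable_on_comparison_test[OF has_sum_imp_summable[OF bound] pointwise nonneg])
  then show "finite_entropy p"
    by (simp add: finite_entropy_def summable_on_uminus)
  then have "((\<lambda>s. - (p s * ln (p s))) has_sum shannon_entropy p) UNIV"
    by (simp add: finite_entropy_def shannon_entropy_def has_sum_uminus)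
  from has_sum_mono[OF this bound pointwise] show "shannon_entropy p
      \<le> expect p (\<lambda>s. ln (\<omega> s)) + (\<Sum>\<^sub>\<infinity>s. 1 / \<omega> s) - 1" .
qed

section \<open>The optimal weight\<close>

definition inv_sq :: "nat \<Rightarrow> real" where
  "inv_sq k = 1 / (real k + 1)^2"

lemma inv_sq_pos: "0 < inv_sq k"
  by (simp add: inv_sq_def)

lemma ln_inv_sq: "ln (inv_sq n) = - 2 * ln (real n + 1)"
  by (simp add: inv_sq_def ln_div ln_realpow)

lemma summable_on_inv_sq: "inv_sq summable_on UNIV"
proof -
  have "summable (\<lambda>n. 1 / (real n + 1)^2)"
    using sums_summable[OF inverse_squares_sums] by (simp add: add.commute)
  then show ?thesis
    unfolding inv_sq_def by (rule summable_nonneg_imp_summable_on) simp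
qed

lemma sum_inv_sq_le: "(\<Sum>k\<le>n. inv_sq k) \<le> 2 - 1 / (real n + 1)"
proof (induction n)
  case 0
  then show ?case by (simp add: inv_sq_def)
next
  case (Suc n)
  have "1 / (real n + 2)^2 \<le> 1 / ((real n + 1) * (real n + 2))"
    unfolding power2_eq_square by (intro divide_left_mono mult_right_mono) auto
  also have "\<dots> = 1 / (real n + 1) - 1 / (real n + 2)"
    by (simp add: field_simps)
  finally have "inv_sq (Suc n) \<le> 1 / (real n + 1) - 1 / (real n + 2)"
    by (simp add: inv_sq_def add.commute)
  with Suc show ?case by (simp add: add.commute)
qed

lemma inv_sq_mult_le: "inv_sq k * inv_sq m \<le> 2 * (inv_sq k + inv_sq m) / (real (k + m) + 2)^2"
proof -
  define x y where "x = real k + 1" and "y = real m + 1"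
  have pos: "0 < x" "0 < y" by (auto simp: x_def y_def)
  have "inv_sq k * inv_sq m = (1 / (x * y))^2"
    by (simp add: inv_sq_def x_def y_def power_divide power_mult_distrib)
  also have "1 / (x * y) = (1 / x + 1 / y) / (x + y)"
  proof -
    have "1 / x + 1 / y = (x + y) / (x * y)" using pos by (simp add: field_simps)
    then show ?thesis using pos by simp
  qed
  also have "((1 / x + 1 / y) / (x + y))^2 = (1 / x + 1 / y)^2 / (x + y)^2"
    by (simp add: power_divide)
  also have "\<dots> \<le> 2 * ((1 / x)^2 + (1 / y)^2) / (x + y)^2"
  proof (rule divide_right_mono)
    have "0 \<le> (1 / x - 1 / y)^2" by simp
    then show "(1 / x + 1 / y)^2 \<le> 2 * ((1 / x)^2 + (1 / y)^2)"
      by (simp add: power2_eq_square algebra_simps)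
  qed simp
  also have "\<dots> = 2 * (inv_sq k + inv_sq m) / (real (k + m) + 2)^2"
    by (simp add: inv_sq_def x_def y_def power_divide)
  finally show ?thesis .
qed

lemma sum_inv_sq_conv_le: "(\<Sum>k\<le>n. inv_sq k * inv_sq (n - k)) \<le> 8 * inv_sq n"
proof -
  have "(\<Sum>k\<le>n. inv_sq k * inv_sq (n - k)) \<le> (\<Sum>k\<le>n. 2 * (inv_sq k + inv_sq (n - k)) / (real n + 2)^2)"
    using inv_sq_mult_le by (intro sum_mono) (metis atMost_iff le_add_diff_inverse)
  also have "\<dots> = 2 / (real n + 2)^2 * (\<Sum>k\<le>n. inv_sq k + inv_sq (n - k))"
    unfolding sum_distrib_left by (intro sum.cong) auto
  also have "\<dots> = 2 / (real n + 2)^2 * ((\<Sum>k\<le>n. inv_sq k) + (\<Sum>k\<le>n. inv_sq (n - k)))"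
    by (simp add: sum.distrib)
  also have "(\<Sum>k\<le>n. inv_sq (n - k)) = (\<Sum>k\<le>n. inv_sq k)"
    by (rule sum.reindex_bij_witness[where i="\<lambda>k. n - k" and j="\<lambda>k. n - k"]) auto
  also have "2 / (real n + 2)^2 * ((\<Sum>k\<le>n. inv_sq k) + (\<Sum>k\<le>n. inv_sq k)) \<le> 2 / (real n + 2)^2 * 4"
  proof -
    have "0 \<le> 1 / (real n + 1)" by simp
    then have "(\<Sum>k\<le>n. inv_sq k) \<le> 2" using sum_inv_sq_le[of n] by linarith
    then show ?thesis by (intro mult_left_mono) auto
  qed
  also have "\<dots> \<le> 8 / (real n + 1)^2"
    by (simp add: field_simps power_mono)
  finally show ?thesis by (simp add: inv_sq_def)
qed

lemma infsum_inv_sq_pairs_le: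
  fixes g :: "nat \<Rightarrow> real"
  assumes g: "\<And>n. 0 \<le> g n" and summable: "(\<lambda>n. inv_sq n * g n) summable_on UNIV"
  shows "(\<lambda>(k, m). inv_sq k * inv_sq m * g (k + m)) summable_on UNIV"
    and "(\<Sum>\<^sub>\<infinity>(k, m). inv_sq k * inv_sq m * g (k + m)) \<le> 8 * (\<Sum>\<^sub>\<infinity>n. inv_sq n * g n)"
proof -
  define c where "c n = (\<Sum>k\<le>n. inv_sq k * inv_sq (n - k))" for n
  define \<Theta> where "\<Theta> = (\<lambda>(n, k). inv_sq k * inv_sq (n - k) * g n)"
  have rows: "((\<lambda>k. \<Theta> (n, k)) has_sum c n * g n) {..n}" for n
    by (rule has_sum_finiteI) (auto simp: \<Theta>_def c_def sum_distrib_right)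
  have c_le: "c n * g n \<le> 8 * (inv_sq n * g n)" for n
    using mult_right_mono[OF sum_inv_sq_conv_le g] by (simp add: c_def mult.assoc)
  have c_nonneg: "0 \<le> c n * g n" for n
    unfolding c_def by (intro mult_nonneg_nonneg sum_nonneg g less_imp_le[OF inv_sq_pos])
  have c_summable: "(\<lambda>n. c n * g n) summable_on UNIV"
    by (rule summable_on_comparison_test[OF summable_on_cmult_right[OF summable, of 8] c_le c_nonneg])
  have "\<Theta> summable_on Sigma UNIV (\<lambda>n. {..n})"
    by (rule summable_on_SigmaI[OF rows c_summable])
       (auto simp: \<Theta>_def intro!: mult_nonneg_nonneg g less_imp_le[OF inv_sq_pos])
  then have \<Theta>_sum: "(\<Theta> has_sum infsum \<Theta> (Sigma UNIV (\<lambda>n. {..n}))) (Sigma UNIV (\<lambda>n. {..n}))"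
    by (rule has_sum_infsum)
  have c_sum: "((\<lambda>n. c n * g n) has_sum infsum \<Theta> (Sigma UNIV (\<lambda>n. {..n}))) UNIV"
    by (rule has_sum_SigmaD[OF \<Theta>_sum]) (use rows in simp)
  have pairs_sum: "((\<lambda>(k, m). inv_sq k * inv_sq m * g (k + m)) has_sum infsum \<Theta> (Sigma UNIV (\<lambda>n. {..n}))) UNIV"
    by (subst has_sum_reindex_bij_witness[where j="\<lambda>(k, m). (k + m, k)" and i="\<lambda>(n, k). (k, n - k)"
          and T="Sigma UNIV (\<lambda>n. {..n})" and h=\<Theta>])
       (use \<Theta>_sum in \<open>auto simp: \<Theta>_def\<close>)
  then show "(\<lambda>(k, m). inv_sq k * inv_sq m * g (k + m)) summable_on UNIV"
    by (rule has_sum_imp_summable)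
  have "(\<Sum>\<^sub>\<infinity>(k, m). inv_sq k * inv_sq m * g (k + m)) = (\<Sum>\<^sub>\<infinity>n. c n * g n)"
    using pairs_sum c_sum by (simp add: infsumI)
  also have "\<dots> \<le> (\<Sum>\<^sub>\<infinity>n. 8 * (inv_sq n * g n))"
    by (rule infsum_mono[OF c_summable summable_on_cmult_right[OF summable] c_le])
  finally show "(\<Sum>\<^sub>\<infinity>(k, m). inv_sq k * inv_sq m * g (k + m)) \<le> 8 * (\<Sum>\<^sub>\<infinity>n. inv_sq n * g n)"
    by (simp add: infsum_cmult_right')
qed

definition pow_mixture :: "('a::group_add \<Rightarrow> real) \<Rightarrow> 'a \<Rightarrow> real" where
  "pow_mixture \<mu> s = (\<Sum>\<^sub>\<infinity>k. inv_sq k * conv_pow \<mu> k s)"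

context
  fixes \<mu> :: "'a::group_add \<Rightarrow> real"
  assumes pm: "prob_fun \<mu>"
begin

lemma pow_mixture_term_nonneg: "0 \<le> inv_sq k * conv_pow \<mu> k s"
  using inv_sq_pos[of k] prob_funD(1)[OF prob_fun_conv_pow[OF pm]] by simp

lemma summable_pow_mixture_terms: "(\<lambda>k. inv_sq k * conv_pow \<mu> k s) summable_on UNIV"
  by (rule summable_on_comparison_test[OF summable_on_inv_sq])
     (use prob_funD[OF prob_fun_conv_pow[OF pm]] inv_sq_pos in \<open>auto intro: mult_left_le less_imp_le
       pow_mixture_term_nonneg\<close>)

lemma pow_mixture_ge_term: "inv_sq k * conv_pow \<mu> k s \<le> pow_mixture \<mu> s"
  unfolding pow_mixture_def
  by (rule infsum_ge_term[OF summable_pow_mixture_terms pow_mixture_term_nonneg]) simp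

lemma pow_mixture_le: "pow_mixture \<mu> s \<le> (\<Sum>\<^sub>\<infinity>k. inv_sq k)"
  unfolding pow_mixture_def
  by (rule infsum_mono[OF summable_pow_mixture_terms summable_on_inv_sq])
     (use prob_funD[OF prob_fun_conv_pow[OF pm]] inv_sq_pos in \<open>auto intro: mult_left_le less_imp_le\<close>)

lemma pow_mixture_pos:
  assumes "nondegenerate \<mu>"
  shows "0 < pow_mixture \<mu> s"
proof -
  obtain n where "0 < conv_pow \<mu> n s" using conv_pow_pos[OF pm assms] .
  then have "0 < inv_sq n * conv_pow \<mu> n s" using inv_sq_pos[of n] by simp
  then show ?thesis using pow_mixture_ge_term[of n s] by linarith
qed

lemma summable_pow_mixture: "pow_mixture \<mu> summable_on UNIV"
proof -
  have "((\<lambda>s. inv_sq k * conv_pow \<mu> k s) has_sum inv_sq k) UNIV" for k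
    using has_sum_cmult_right[OF prob_funD(2)[OF prob_fun_conv_pow[OF pm]], of "inv_sq k" k] by simp
  then have "(\<lambda>(k, s). inv_sq k * conv_pow \<mu> k s) summable_on UNIV \<times> UNIV"
    by (intro summable_on_SigmaI[OF _ summable_on_inv_sq]) (auto simp: pow_mixture_term_nonneg)
  then have "(\<lambda>(s, k). inv_sq k * conv_pow \<mu> k s) summable_on UNIV \<times> UNIV"
    by (subst (asm) summable_on_swap) (simp add: case_prod_unfold)
  from summable_on_SigmaD[OF this] show ?thesis
    unfolding pow_mixture_def using summable_pow_mixture_terms by simp
qed

lemma pow_mixture_mult_le: "pow_mixture \<mu> s * pow_mixture \<mu> t \<le> 8 * pow_mixture \<mu> (s + t)"
proof -
  have "pow_mixture \<mu> s * pow_mixture \<mu> t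
      = (\<Sum>\<^sub>\<infinity>(k, m). (inv_sq k * conv_pow \<mu> k s) * (inv_sq m * conv_pow \<mu> m t))"
    unfolding pow_mixture_def
    using infsumI[OF has_sum_product[OF summable_pow_mixture_terms summable_pow_mixture_terms]] by simp
  also have "\<dots> \<le> (\<Sum>\<^sub>\<infinity>(k, m). inv_sq k * inv_sq m * conv_pow \<mu> (k + m) (s + t))"
  proof (rule infsum_mono)
    show "(\<lambda>(k, m). (inv_sq k * conv_pow \<mu> k s) * (inv_sq m * conv_pow \<mu> m t)) summable_on UNIV"
      using has_sum_imp_summable[OF has_sum_product[OF summable_pow_mixture_terms summable_pow_mixture_terms]]
      by simp
    show "(\<lambda>(k, m). inv_sq k * inv_sq m * conv_pow \<mu> (k + m) (s + t)) summable_on UNIV"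
      by (rule infsum_inv_sq_pairs_le(1)[OF prob_funD(1)[OF prob_fun_conv_pow[OF pm]] summable_pow_mixture_terms])
    show "(\<lambda>(k, m). (inv_sq k * conv_pow \<mu> k s) * (inv_sq m * conv_pow \<mu> m t)) p
        \<le> (\<lambda>(k, m). inv_sq k * inv_sq m * conv_pow \<mu> (k + m) (s + t)) p" for p
      using inv_sq_pos conv_pow_mult_le[OF pm]
      by (auto simp: case_prod_unfold algebra_simps intro!: mult_left_mono mult_nonneg_nonneg less_imp_le)
  qed
  also have "\<dots> \<le> 8 * pow_mixture \<mu> (s + t)"
    unfolding pow_mixture_def
    by (rule infsum_inv_sq_pairs_le(2)[OF prob_funD(1)[OF prob_fun_conv_pow[OF pm]] summable_pow_mixture_terms])
  finally show ?thesis .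
qed

lemma conv_pow_mixture_le: "conv (pow_mixture \<mu>) (pow_mixture \<mu>) s \<le> 8 * pow_mixture \<mu> s"
proof -
  define X where "X t = (\<lambda>(k, m). (inv_sq k * conv_pow \<mu> k t) * (inv_sq m * conv_pow \<mu> m (- t + s)))" for t
  define g where "g = (\<lambda>(k, m). inv_sq k * inv_sq m * conv_pow \<mu> (k + m) s)"
  have products: "pow_mixture \<mu> t * pow_mixture \<mu> (- t + s) = infsum (X t) UNIV" for t
    unfolding pow_mixture_def X_def
    using infsumI[OF has_sum_product[OF summable_pow_mixture_terms summable_pow_mixture_terms]] by simp
  have columns: "((\<lambda>t. X t p) has_sum g p) UNIV" for p
  proof -
    obtain k m where p: "p = (k, m)" by (cases p)
    have "((\<lambda>t. conv_pow \<mu> k t * conv_pow \<mu> m (- t + s)) has_sum conv_pow \<mu> (k + m) s) UNIV"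
      using has_sum_conv[OF prob_fun_conv_pow[OF pm] prob_fun_conv_pow[OF pm]] by (simp add: conv_pow_add[OF pm])
    from has_sum_cmult_right[OF this, of "inv_sq k * inv_sq m"] show ?thesis
      by (simp add: p X_def g_def algebra_simps)
  qed
  have g_summable: "g summable_on UNIV"
    unfolding g_def
    by (rule infsum_inv_sq_pairs_le(1)[OF prob_funD(1)[OF prob_fun_conv_pow[OF pm]] summable_pow_mixture_terms])
  have "(\<lambda>(p, t). X t p) summable_on UNIV \<times> UNIV"
    by (rule summable_on_SigmaI[OF _ g_summable])
       (use columns in \<open>auto simp: X_def case_prod_unfold intro!: mult_nonneg_nonneg pow_mixture_term_nonneg\<close>)
  then have "(\<lambda>(t, p). X t p) summable_on UNIV \<times> UNIV"
    by (subst (asm) summable_on_swap) (simp add: case_prod_unfold)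
  then have "conv (pow_mixture \<mu>) (pow_mixture \<mu>) s = (\<Sum>\<^sub>\<infinity>p. \<Sum>\<^sub>\<infinity>t. X t p)"
    unfolding conv_def products by (rule infsum_swap_banach)
  also have "\<dots> = infsum g UNIV"
    using infsumI[OF columns] by simp
  also have "\<dots> \<le> 8 * pow_mixture \<mu> s"
    unfolding g_def pow_mixture_def
    by (rule infsum_inv_sq_pairs_le(2)[OF prob_funD(1)[OF prob_fun_conv_pow[OF pm]] summable_pow_mixture_terms])
  finally show ?thesis .
qed

end

text \<open>The optimal weight \<open>\<omega>\<^sub>0\<close>; nondegeneracy rules out the junk value \<open>1 / 0 = 0\<close>.\<close>
definition mixture_weight :: "('a::group_add \<Rightarrow> real) \<Rightarrow> 'a \<Rightarrow> real" where
  "mixture_weight \<mu> s = 1 / pow_mixture \<mu> s"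

context
  fixes \<mu> :: "'a::group_add \<Rightarrow> real"
  assumes pm: "prob_fun \<mu>" and nd: "nondegenerate \<mu>"
begin

lemma is_weight_mixture_weight: "is_weight (mixture_weight \<mu>)"
proof -
  define S where "S = (\<Sum>\<^sub>\<infinity>k. inv_sq k)"
  have pos: "0 < pow_mixture \<mu> s" and le: "pow_mixture \<mu> s \<le> S" for s
    using pow_mixture_pos[OF pm nd] pow_mixture_le[OF pm] by (auto simp: S_def)
  have "0 < 1 / S" using pos[of 0] le[of 0] by simp
  moreover have "1 / S \<le> mixture_weight \<mu> s" for s
    unfolding mixture_weight_def using pos[of s] le[of s] by (intro divide_left_mono) auto
  moreover have "mixture_weight \<mu> (s + t) \<le> 8 * mixture_weight \<mu> s * mixture_weight \<mu> t" for s t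
    using pow_mixture_mult_le[OF pm, of s t] pos[of s] pos[of t] pos[of "s + t"]
    by (simp add: mixture_weight_def field_simps)
  moreover have "(0::real) < 8" by simp
  ultimately show ?thesis
    unfolding is_weight_def by blast
qed

lemma ln_mixture_weight_le:
  assumes "0 < conv_pow \<mu> n s"
  shows "ln (mixture_weight \<mu> s) \<le> 2 * ln (real n + 1) - ln (conv_pow \<mu> n s)"
proof -
  have "ln (inv_sq n * conv_pow \<mu> n s) \<le> ln (pow_mixture \<mu> s)"
    using pow_mixture_ge_term[OF pm, of n s] assms inv_sq_pos[of n] pow_mixture_pos[OF pm nd, of s] by simp
  then show ?thesis
    using assms inv_sq_pos[of n] pow_mixture_pos[OF pm nd, of s]
    by (simp add: mixture_weight_def ln_div ln_mult ln_inv_sq)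
qed

lemma ln_mixture_weight_ge: "- ln (\<Sum>\<^sub>\<infinity>k. inv_sq k) \<le> ln (mixture_weight \<mu> s)"
  using pow_mixture_le[OF pm, of s] pow_mixture_pos[OF pm nd, of s]
  by (simp add: mixture_weight_def ln_div)

lemma log_moment_finite_mixture_weight:
  assumes fe: "finite_entropy \<mu>"
  shows "log_moment_finite \<mu> (mixture_weight \<mu>)"
proof -
  define c where "c = 2 * ln 2 + \<bar>ln (\<Sum>\<^sub>\<infinity>k. inv_sq k)\<bar>"
  have bound: "norm (\<mu> s * ln (mixture_weight \<mu> s)) \<le> norm (\<mu> s * ln (\<mu> s)) + \<mu> s * c" for s
  proof (cases "\<mu> s = 0")
    case False
    then have \<mu>_pos: "0 < \<mu> s" using prob_funD(1)[OF pm, of s] by simp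
    have "ln (mixture_weight \<mu> s) \<le> 2 * ln 2 - ln (\<mu> s)"
      using ln_mixture_weight_le[of 1 s, unfolded conv_pow_1] \<mu>_pos by simp
    moreover have "- ln (\<Sum>\<^sub>\<infinity>k. inv_sq k) \<le> ln (mixture_weight \<mu> s)"
      by (rule ln_mixture_weight_ge)
    moreover have "0 \<le> ln (2::real)" by simp
    ultimately have "\<bar>ln (mixture_weight \<mu> s)\<bar> \<le> \<bar>ln (\<mu> s)\<bar> + c"
      using abs_ge_minus_self[of "ln (\<mu> s)"] abs_ge_self[of "ln (\<Sum>\<^sub>\<infinity>k. inv_sq k)"]
        abs_ge_zero[of "ln (\<mu> s)"] abs_ge_zero[of "ln (\<Sum>\<^sub>\<infinity>k. inv_sq k)"]
      unfolding c_def abs_le_iff by (intro conjI) linarith+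
    then have "\<mu> s * \<bar>ln (mixture_weight \<mu> s)\<bar> \<le> \<mu> s * (\<bar>ln (\<mu> s)\<bar> + c)"
      using \<mu>_pos by (intro mult_left_mono) auto
    also have "\<dots> = norm (\<mu> s * ln (\<mu> s)) + \<mu> s * c"
      using \<mu>_pos by (simp add: abs_mult distrib_left)
    finally show ?thesis
      using \<mu>_pos by (simp add: abs_mult)
  qed simp
  have "(\<lambda>s. norm (\<mu> s * ln (\<mu> s))) summable_on UNIV"
    using fe unfolding finite_entropy_def by (rule summable_on_iff_abs_summable_on_real[THEN iffD1])
  then have "(\<lambda>s. norm (\<mu> s * ln (\<mu> s)) + \<mu> s * c) summable_on UNIV"
    by (rule summable_on_add[OF _ summable_on_cmult_left[OF prob_funD(3)[OF pm]]])
  then have "(\<lambda>s. norm (\<mu> s * ln (mixture_weight \<mu> s))) summable_on UNIV"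
    by (rule Infinite_Sum.abs_summable_on_comparison_test') (rule bound)
  then show ?thesis
    unfolding log_moment_finite_def by (rule abs_summable_summable)
qed

lemma mixture_weight_in_Omega: "finite_entropy \<mu> \<Longrightarrow> mixture_weight \<mu> \<in> Omega \<mu>"
  using is_weight_mixture_weight log_moment_finite_mixture_weight summable_pow_mixture[OF pm]
  by (simp add: Omega_def inv_l1_def mixture_weight_def)

lemma expect_ln_mixture_weight_le:
  assumes fe: "finite_entropy \<mu>"
  shows "expect (conv_pow \<mu> n) (\<lambda>s. ln (mixture_weight \<mu> s))
    \<le> shannon_entropy (conv_pow \<mu> n) + 2 * ln (real n + 1)"
proof -
  note P = prob_funD[OF prob_fun_conv_pow[OF pm, of n]]
  have ln_summable: "(\<lambda>s. conv_pow \<mu> n s * ln (mixture_weight \<mu> s)) summable_on UNIV"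
    by (rule summable_conv_pow_ln_weight[OF pm is_weight_mixture_weight log_moment_finite_mixture_weight[OF fe]])
  have "finite_entropy (conv_pow \<mu> n)"
    using entropy_le_cross_entropy(1)[OF prob_fun_conv_pow[OF pm] is_weight_pos[OF is_weight_mixture_weight]
        ln_summable] summable_pow_mixture[OF pm]
    by (simp add: mixture_weight_def)
  then have entropy_sum: "((\<lambda>s. - (conv_pow \<mu> n s * ln (conv_pow \<mu> n s))) has_sum shannon_entropy (conv_pow \<mu> n)) UNIV"
    by (simp add: finite_entropy_def shannon_entropy_def has_sum_uminus)
  have pointwise: "conv_pow \<mu> n s * ln (mixture_weight \<mu> s)
      \<le> - (conv_pow \<mu> n s * ln (conv_pow \<mu> n s)) + conv_pow \<mu> n s * (2 * ln (real n + 1))" for s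
  proof (cases "conv_pow \<mu> n s = 0")
    case False
    then have p: "0 < conv_pow \<mu> n s" using P(1)[of s] by simp
    then have "conv_pow \<mu> n s * ln (mixture_weight \<mu> s)
        \<le> conv_pow \<mu> n s * (2 * ln (real n + 1) - ln (conv_pow \<mu> n s))"
      using ln_mixture_weight_le[OF p] p by (intro mult_left_mono) auto
    then show ?thesis by (simp add: algebra_simps)
  qed simp
  have "expect (conv_pow \<mu> n) (\<lambda>s. ln (mixture_weight \<mu> s))
      \<le> shannon_entropy (conv_pow \<mu> n) + 1 * (2 * ln (real n + 1))"
    unfolding expect_def
    by (rule has_sum_mono[OF has_sum_infsum[OF ln_summable]
          has_sum_add[OF entropy_sum has_sum_cmult_left[OF P(2)]] pointwise])
  then show ?thesis by simp
qed

end

section \<open>Entropy and Lyapunov exponents\<close>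

lemma ln_over_n: "(\<lambda>n. ln (real n + 1) / real n) \<longlonglongrightarrow> 0"
proof -
  have "(\<lambda>n. ln (real (Suc n)) / real (Suc n) * (real (Suc n) / real n)) \<longlonglongrightarrow> 0 * 1"
    by (intro tendsto_mult LIMSEQ_Suc[OF lim_ln_over_n] LIMSEQ_Suc_n_over_n)
  moreover have "ln (real (Suc n)) / real (Suc n) * (real (Suc n) / real n) = ln (real n + 1) / real n" for n
    by (cases "n = 0") (simp_all add: add.commute)
  ultimately show ?thesis by (simp add: add.commute)
qed

lemma avez_seq_le_lyap_seq:
  assumes pm: "prob_fun \<mu>" and \<omega>: "\<omega> \<in> Omega \<mu>" and n: "0 < n"
  shows "avez_seq \<mu> n \<le> lyap_seq \<omega> \<mu> n + ((\<Sum>\<^sub>\<infinity>s. 1 / \<omega> s) - 1) / real n"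
proof -
  have w: "is_weight \<omega>" and lm: "log_moment_finite \<mu> \<omega>" and inv: "inv_l1 \<omega>"
    using \<omega> by (auto simp: Omega_def)
  have "shannon_entropy (conv_pow \<mu> n)
      \<le> expect (conv_pow \<mu> n) (\<lambda>s. ln (\<omega> s)) + ((\<Sum>\<^sub>\<infinity>s. 1 / \<omega> s) - 1)"
    using entropy_le_cross_entropy(2)[OF prob_fun_conv_pow[OF pm, of n] is_weight_pos[OF w]
        summable_conv_pow_ln_weight[OF pm w lm] inv[unfolded inv_l1_def]] by linarith
  then have "shannon_entropy (conv_pow \<mu> n) / real n
      \<le> (expect (conv_pow \<mu> n) (\<lambda>s. ln (\<omega> s)) + ((\<Sum>\<^sub>\<infinity>s. 1 / \<omega> s) - 1)) / real n"
    using n by (intro divide_right_mono) auto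
  then show ?thesis
    by (simp add: avez_seq_def lyap_seq_def expect_def add_divide_distrib)
qed

lemma avez_limit_le_lyapunov:
  assumes pm: "prob_fun \<mu>" and avez: "avez_seq \<mu> \<longlonglongrightarrow> h" and \<omega>: "\<omega> \<in> Omega \<mu>"
  shows "h \<le> lyapunov \<omega> \<mu>"
proof (rule tendsto_le[OF _ _ avez])
  show "(\<lambda>n. lyap_seq \<omega> \<mu> n + ((\<Sum>\<^sub>\<infinity>s. 1 / \<omega> s) - 1) / real n) \<longlonglongrightarrow> lyapunov \<omega> \<mu>"
    using \<omega> tendsto_add[OF lyap_seq_tendsto_lyapunov[OF pm] lim_const_over_n] by (auto simp: Omega_def)
  show "\<forall>\<^sub>F n in sequentially. avez_seq \<mu> n \<le> lyap_seq \<omega> \<mu> n + ((\<Sum>\<^sub>\<infinity>s. 1 / \<omega> s) - 1) / real n"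
    using avez_seq_le_lyap_seq[OF pm \<omega>] by (intro eventually_sequentiallyI[of 1]) auto
qed simp

lemma avez_seq_tendsto_lyapunov_mixture_weight:
  assumes pm: "prob_fun \<mu>" and nd: "nondegenerate \<mu>" and fe: "finite_entropy \<mu>"
  shows "avez_seq \<mu> \<longlonglongrightarrow> lyapunov (mixture_weight \<mu>) \<mu>"
proof -
  let ?\<omega> = "mixture_weight \<mu>"
  have \<omega>: "?\<omega> \<in> Omega \<mu>" by (rule mixture_weight_in_Omega[OF pm nd fe])
  have lyap: "lyap_seq ?\<omega> \<mu> \<longlonglongrightarrow> lyapunov ?\<omega> \<mu>"
    using \<omega> lyap_seq_tendsto_lyapunov[OF pm] by (auto simp: Omega_def)
  show ?thesis
  proof (rule tendsto_sandwich)
    show "\<forall>\<^sub>F n in sequentially. lyap_seq ?\<omega> \<mu> n - 2 * (ln (real n + 1) / real n) \<le> avez_seq \<mu> n"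
    proof (intro eventually_sequentiallyI[of 1])
      fix n :: nat
      assume "1 \<le> n"
      then have "(expect (conv_pow \<mu> n) (\<lambda>s. ln (?\<omega> s)) - 2 * ln (real n + 1)) / real n
          \<le> shannon_entropy (conv_pow \<mu> n) / real n"
        using expect_ln_mixture_weight_le[OF pm nd fe, of n] by (intro divide_right_mono) auto
      then show "lyap_seq ?\<omega> \<mu> n - 2 * (ln (real n + 1) / real n) \<le> avez_seq \<mu> n"
        by (simp add: avez_seq_def lyap_seq_def expect_def diff_divide_distrib)
    qed
    show "\<forall>\<^sub>F n in sequentially. avez_seq \<mu> n \<le> lyap_seq ?\<omega> \<mu> n + ((\<Sum>\<^sub>\<infinity>s. 1 / ?\<omega> s) - 1) / real n"
      using avez_seq_le_lyap_seq[OF pm \<omega>] by (intro eventually_sequentiallyI[of 1]) auto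
    show "(\<lambda>n. lyap_seq ?\<omega> \<mu> n - 2 * (ln (real n + 1) / real n)) \<longlonglongrightarrow> lyapunov ?\<omega> \<mu>"
      using tendsto_diff[OF lyap tendsto_mult_right_zero[OF ln_over_n]] by simp
    show "(\<lambda>n. lyap_seq ?\<omega> \<mu> n + ((\<Sum>\<^sub>\<infinity>s. 1 / ?\<omega> s) - 1) / real n) \<longlonglongrightarrow> lyapunov ?\<omega> \<mu>"
      using tendsto_add[OF lyap lim_const_over_n] by simp
  qed
qed

theorem theorem4p7:
  fixes \<mu> :: "'a::{group_add, countable} \<Rightarrow> real"
  assumes "prob_fun \<mu>" and "nondegenerate \<mu>" and "finite_entropy \<mu>"
  shows "\<exists>h::real. avez_seq \<mu> \<longlonglongrightarrow> h
      \<and> h = (INF \<omega>\<in>Omega \<mu>. lyapunov \<omega> \<mu>)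
      \<and> (\<forall>\<omega>\<in>Omega \<mu>. h \<le> lyapunov \<omega> \<mu>)
      \<and> (\<exists>\<omega>b\<in>Omega \<mu>. (\<exists>d>0. \<forall>s. conv (\<lambda>t. 1 / \<omega>b t) (\<lambda>t. 1 / \<omega>b t) s \<le> d * (1 / \<omega>b s))
             \<and> lyap_seq \<omega>b \<mu> \<longlonglongrightarrow> h \<and> lyapunov \<omega>b \<mu> = h)"
proof -
  let ?\<omega> = "mixture_weight \<mu>"
  have \<omega>: "?\<omega> \<in> Omega \<mu>" by (rule mixture_weight_in_Omega[OF assms])
  have avez: "avez_seq \<mu> \<longlonglongrightarrow> lyapunov ?\<omega> \<mu>"
    by (rule avez_seq_tendsto_lyapunov_mixture_weight[OF assms])
  have minimal: "\<forall>\<omega>\<in>Omega \<mu>. lyapunov ?\<omega> \<mu> \<le> lyapunov \<omega> \<mu>"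
    using avez_limit_le_lyapunov[OF assms(1) avez] by blast
  then have "lyapunov ?\<omega> \<mu> = (INF \<omega>\<in>Omega \<mu>. lyapunov \<omega> \<mu>)"
    using \<omega> by (intro cInf_eq_minimum[symmetric]) auto
  moreover have "\<exists>d>0. \<forall>s. conv (\<lambda>t. 1 / ?\<omega> t) (\<lambda>t. 1 / ?\<omega> t) s \<le> d * (1 / ?\<omega> s)"
    using conv_pow_mixture_le[OF assms(1)] by (intro exI[of _ 8]) (simp add: mixture_weight_def)
  moreover have "lyap_seq ?\<omega> \<mu> \<longlonglongrightarrow> lyapunov ?\<omega> \<mu>"
    using \<omega> lyap_seq_tendsto_lyapunov[OF assms(1)] by (auto simp: Omega_def)
  ultimately show ?thesis
    using avez minimal \<omega> by blast
qed

end
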